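(* Consider POWERSET SALIQUOT. Then $\mathcal{SG}(0)=0$, and $\mathcal{SG}(n)=2^p$, if $2^p$ is largest power of two divisor of $n\ge 1$.
   Context: POWERSET SALIQUOT is the impartial normal-play game on nonnegative integer heaps where from a heap $n\ge1$ a player chooses any nonempty set $S$ of positive divisors of $n$ and moves to the disjunctive sum of the heaps $n-d$, $d\in S$; the heap $0$ is terminal. $\mathcal{SG}$ denotes the Sprague-Grundy value (mex rule, nim-sum). *)

theory Defs
  imports Main
begin

definition mex :: "nat set \<Rightarrow> nat" where
  "mex A = (LEAST k. k \<notin> A)"

definition nim_sum :: "(nat \<Rightarrow> nat) \<Rightarrow> nat set \<Rightarrow> nat" where
  "nim_sum f S = Finite_Set.fold (\<lambda>d acc. Bit_Operations.xor (f d) acc) 0 S"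

definition divs :: "nat \<Rightarrow> nat set" where
  "divs n = {d. 0 < d \<and> d dvd n}"

text \<open>Sprague-Grundy value of POWERSET SALIQUOT: from heap n \<ge> 1 one moves to the
  disjunctive sum of heaps n - d, d \<in> S, for a nonempty set S of positive divisors of n;
  the SG value of a disjunctive sum is the nim-sum of the SG values.\<close>
function sg :: "nat \<Rightarrow> nat" where
  "sg n = (if n = 0 then 0 else
     mex {nim_sum (\<lambda>d. if d \<in> divs n then sg (n - d) else 0) S
          | S. S \<noteq> {} \<and> S \<subseteq> divs n})"
  by auto
termination
  by (relation "measure id") (auto simp: divs_def)

end

theory Submission
  imports Defs "HOL-Computational_Algebra.Primes"
begin

text \<open>Write \<open>v(n)\<close> for the 2-adic valuation of \<open>n\<close> and argue by strong induction on \<open>n\<close>.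
  If \<open>d\<close> is a proper divisor of \<open>n = d c\<close>, then \<open>n - d = d (c - 1)\<close> and exactly one of the
  consecutive numbers \<open>c - 1\<close>, \<open>c\<close> is even, so \<open>v(n - d) \<noteq> v(n)\<close>. Hence every option of \<open>n\<close>
  is a nim-sum of zeros and powers \<open>2^q\<close> with \<open>q \<noteq> v(n)\<close>, and \<open>2^v(n)\<close> is never reached.
  Conversely every \<open>k < 2^v(n)\<close> is reached by removing \<open>n\<close> itself together with the divisors
  \<open>2^a\<close> for the bits \<open>a\<close> of \<open>k\<close>, since \<open>v(n - 2^a) = a\<close> for \<open>a < v(n)\<close>.\<close>

lemma mex_eqI:
  assumes "k \<notin> A" and "{..<k} \<subseteq> A"
  shows "mex A = k"
  unfolding mex_def using assms by (intro Least_equality) (auto simp: not_le[symmetric])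

lemma nim_sum_insert:
  assumes "finite S" and "x \<notin> S"
  shows "nim_sum f (insert x S) = xor (f x) (nim_sum f S)"
proof -
  interpret comp_fun_commute "\<lambda>d acc. xor (f d) (acc::nat)"
    by unfold_locales (auto simp: fun_eq_iff ac_simps)
  show ?thesis
    unfolding nim_sum_def using assms by (simp add: fold_insert)
qed

lemma bit_nim_sum_iff:
  assumes "finite S"
  shows "bit (nim_sum f S) i \<longleftrightarrow> odd (card {d\<in>S. bit (f d) i})"
  using assms
proof (induction S rule: finite_induct)
  case empty
  then show ?case by (simp add: nim_sum_def)
next
  case (insert x S)
  then have "{d\<in>insert x S. bit (f d) i} =
      (if bit (f x) i then insert x {d\<in>S. bit (f d) i} else {d\<in>S. bit (f d) i})"
    by auto
  with insert show ?case by (simp add: nim_sum_insert bit_xor_iff)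
qed

lemma nim_sum_cong:
  assumes "finite S" and "\<And>d. d \<in> S \<Longrightarrow> f d = g d"
  shows "nim_sum f S = nim_sum g S"
proof (rule bit_eqI)
  fix i
  have "{d\<in>S. bit (f d) i} = {d\<in>S. bit (g d) i}" using assms(2) by auto
  then show "bit (nim_sum f S) i \<longleftrightarrow> bit (nim_sum g S) i"
    using assms(1) by (simp add: bit_nim_sum_iff)
qed

lemma bit_nat_imp_exp_le:
  assumes "bit (k::nat) i"
  shows "2 ^ i \<le> k"
proof (rule ccontr)
  assume "\<not> 2 ^ i \<le> k"
  then have "k div 2 ^ i = 0" by simp
  with assms show False by (simp add: bit_iff_odd)
qed

lemma finite_bits_nat: "finite {i. bit (k::nat) i}"
proof (rule finite_subset)
  show "{i. bit k i} \<subseteq> {..<k}"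
  proof
    fix i assume "i \<in> {i. bit k i}"
    then have "2 ^ i \<le> k" by (simp add: bit_nat_imp_exp_le)
    then show "i \<in> {..<k}" by (metis less_exp order_less_le_trans lessThan_iff)
  qed
qed simp

lemma nim_sum_powers_of_bits: "nim_sum (\<lambda>d. d) ((\<lambda>i. 2 ^ i) ` {i. bit k i}) = (k::nat)"
proof (rule bit_eqI)
  fix j
  have "{d \<in> (\<lambda>i. 2 ^ i :: nat) ` {i. bit k i}. bit d j} = (if bit k j then {2 ^ j} else {})"
    by (auto simp: bit_exp_iff)
  then show "bit (nim_sum (\<lambda>d. d) ((\<lambda>i. 2 ^ i) ` {i. bit k i})) j \<longleftrightarrow> bit k j"
    by (simp add: bit_nim_sum_iff finite_bits_nat)
qed

lemma finite_divs: "0 < n \<Longrightarrow> finite (divs n)"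
  by (rule finite_subset[of _ "{..n}"]) (auto simp: divs_def dvd_imp_le)

lemma multiplicity_two_Suc_neq:
  assumes "0 < m"
  shows "multiplicity 2 (Suc m) \<noteq> multiplicity (2::nat) m"
proof (cases "even m")
  case True
  with assms have "multiplicity 2 m > 0" by (simp add: multiplicity_gt_zero_iff)
  moreover from True have "multiplicity 2 (Suc m) = 0" by (simp add: not_dvd_imp_multiplicity_0)
  ultimately show ?thesis by simp
next
  case False
  with assms have "multiplicity 2 (Suc m) > 0" by (simp add: multiplicity_gt_zero_iff)
  moreover from False have "multiplicity 2 m = 0" by (simp add: not_dvd_imp_multiplicity_0)
  ultimately show ?thesis by simp
qed

lemma multiplicity_two_diff_divisor:
  fixes n d :: nat
  assumes "d dvd n" and "0 < d" and "d < n"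
  shows "multiplicity 2 (n - d) \<noteq> multiplicity 2 n"
proof -
  obtain c where n: "n = d * c" using assms(1) ..
  with assms have "1 < c" by (cases c) auto
  then have c: "c = Suc (c - 1)" "0 < c - 1" by simp_all
  have "n - d = d * (c - 1)" using n by (simp add: diff_mult_distrib2)
  then have "multiplicity 2 (n - d) = multiplicity 2 d + multiplicity 2 (c - 1)"
    using assms(2) c by (simp add: prime_elem_multiplicity_mult_distrib)
  moreover have "multiplicity 2 n = multiplicity 2 d + multiplicity 2 c"
    using n assms(2) c by (simp add: prime_elem_multiplicity_mult_distrib)
  ultimately show ?thesis
    using multiplicity_two_Suc_neq[OF c(2)] c(1) by simp
qed

lemma multiplicity_two_diff_exp:
  fixes n :: nat
  assumes "2 ^ Suc a dvd n" and "0 < n"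
  shows "multiplicity 2 (n - 2 ^ a) = a"
proof -
  obtain m where n: "n = 2 ^ a * (2 * m)" using assms(1) by (auto simp: mult.assoc)
  with assms(2) have eq: "n - 2 ^ a = 2 ^ a * (2 * m - 1)" by (simp add: diff_mult_distrib2)
  have "0 < m" using n assms(2) by simp
  then have "odd (2 * m - 1)" by presburger
  then show ?thesis by (rule multiplicity_decomposeI[OF eq]) simp
qed

lemma sg_0 [simp]: "sg 0 = 0"
  by simp

declare sg.simps [simp del] \<comment> \<open>the unconditional recursion equation makes the simplifier loop\<close>

definition sg_option_values :: "nat \<Rightarrow> nat set" where
  "sg_option_values n = {nim_sum (\<lambda>d. if d \<in> divs n then sg (n - d) else 0) S | S. S \<noteq> {} \<and> S \<subseteq> divs n}"

lemma sg_eq_mex_sg_option_values: "0 < n \<Longrightarrow> sg n = mex (sg_option_values n)"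
  unfolding sg_option_values_def by (subst sg.simps) simp

context
  fixes n :: nat
  assumes pos: "0 < n"
    and IH: "\<And>m. 0 < m \<Longrightarrow> m < n \<Longrightarrow> sg m = 2 ^ multiplicity 2 m"
begin

lemma sg_option_values_not_bit:
  assumes "x \<in> sg_option_values n"
  shows "\<not> bit x (multiplicity 2 n)"
proof -
  define v where "v = multiplicity 2 n"
  define F where "F d = (if d \<in> divs n then sg (n - d) else 0)" for d
  obtain S where S: "S \<subseteq> divs n" and x: "x = nim_sum F S"
    using assms unfolding sg_option_values_def F_def by blast
  have "\<not> bit (F d) v" if "d \<in> divs n" for d
  proof (cases "d = n")
    case False
    from that have d: "d dvd n" "0 < d" by (simp_all add: divs_def)
    have "d < n" using dvd_imp_le[OF d(1) pos] False by simp
    then have "sg (n - d) = 2 ^ multiplicity 2 (n - d)" using d by (intro IH) simp_all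
    moreover have "multiplicity 2 (n - d) \<noteq> v"
      unfolding v_def using d \<open>d < n\<close> by (rule multiplicity_two_diff_divisor)
    ultimately show ?thesis using that by (simp add: F_def bit_exp_iff)
  qed (simp add: F_def)
  then have no_bits: "{d\<in>S. bit (F d) v} = {}" using S by auto
  have fin: "finite S" using S finite_divs[OF pos] by (rule finite_subset)
  show ?thesis unfolding x v_def[symmetric] bit_nim_sum_iff[OF fin] no_bits by simp
qed

lemma less_exp_multiplicity_in_sg_option_values:
  assumes k: "k < 2 ^ multiplicity 2 n"
  shows "k \<in> sg_option_values n"
proof -
  define F where "F d = (if d \<in> divs n then sg (n - d) else 0)" for d
  define T where "T = (\<lambda>i. (2::nat) ^ i) ` {i. bit k i}"
  have bits_below: "i < multiplicity 2 n" if "bit k i" for i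
  proof -
    have "2 ^ i < (2::nat) ^ multiplicity 2 n"
      using bit_nat_imp_exp_le[OF that] k by (rule order_le_less_trans)
    then show ?thesis by (rule power_less_imp_less_exp[rotated]) simp
  qed
  have T_props: "d \<in> divs n \<and> d < n \<and> F d = d" if d_T: "d \<in> T" for d
  proof -
    obtain i where d: "d = 2 ^ i" and "bit k i" using d_T unfolding T_def by blast
    have "2 ^ Suc i dvd n"
      using bits_below[OF \<open>bit k i\<close>] by (intro multiplicity_dvd') simp
    moreover from this have "2 ^ Suc i \<le> n" using pos by (rule dvd_imp_le)
    moreover have "d dvd 2 ^ Suc i" and "d < 2 ^ Suc i" using d by simp_all
    ultimately have "d dvd n" and "d < n" by (auto intro: dvd_trans)
    moreover have "sg (n - d) = d"
      using IH[of "n - d"] \<open>d < n\<close> d multiplicity_two_diff_exp[OF \<open>2 ^ Suc i dvd n\<close> pos] by simp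
    ultimately show ?thesis using d by (simp add: F_def divs_def)
  qed
  have "finite T" by (simp add: T_def finite_bits_nat)
  then have "nim_sum F (insert n T) = xor (F n) (nim_sum F T)"
    using T_props by (intro nim_sum_insert) blast+
  also have "\<dots> = nim_sum F T" by (simp add: F_def)
  also have "\<dots> = nim_sum (\<lambda>d. d) T"
    using \<open>finite T\<close> T_props by (intro nim_sum_cong) blast+
  also have "\<dots> = k"
    unfolding T_def by (rule nim_sum_powers_of_bits)
  finally have "nim_sum F (insert n T) = k" .
  moreover have "insert n T \<subseteq> divs n" using T_props pos by (auto simp: divs_def)
  ultimately show ?thesis unfolding sg_option_values_def F_def by blast
qed

end

lemma sg_eq_exp_multiplicity: "0 < n \<Longrightarrow> sg n = 2 ^ multiplicity 2 n"
proof (induction n rule: less_induct)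
  case (less n)
  show ?case
  proof (subst sg_eq_mex_sg_option_values[OF less.prems], rule mex_eqI)
    have "bit (2 ^ multiplicity 2 n :: nat) (multiplicity 2 n)" by (simp add: bit_exp_iff)
    then show "2 ^ multiplicity 2 n \<notin> sg_option_values n"
      using sg_option_values_not_bit[OF less.prems less.IH] by blast
    show "{..<2 ^ multiplicity 2 n} \<subseteq> sg_option_values n"
      using less_exp_multiplicity_in_sg_option_values[OF less.prems less.IH] by auto
  qed
qed

theorem mainTheorem15:
  shows "sg 0 = 0 \<and>
    (\<forall>n p. 1 \<le> n \<longrightarrow> 2 ^ p dvd n \<longrightarrow> \<not> 2 ^ (Suc p) dvd n \<longrightarrow> sg n = 2 ^ p)"
proof -
  have "sg n = 2 ^ p" if "1 \<le> n" "2 ^ p dvd n" "\<not> 2 ^ Suc p dvd n" for n p :: nat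
    using that sg_eq_exp_multiplicity multiplicity_eqI[OF that(2,3)] by simp
  then show ?thesis by simp
qed

end
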